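(* Let $\mathbf{v}_1,\mathbf{r}_u,\mathbf{r}_v\in\mathbb{R}^3$ with $\mathbf{r}_u,\mathbf{r}_v$ linearly independent, and let $\mathbf{r}_q(u,v)=\mathbf{r}_u u+\mathbf{r}_v v+\mathbf{v}_1$. For integers $n\ge 0$, $|m|\le n$, $b\ge 0$, $c\ge 0$ define $$Q_{n,b}^{m,c}(u,v)=R_n^m(\mathbf{r}_q(u,v))\,u^b v^c,\qquad \psi_{n,b}^{m,c}=\int_0^1\!\!\int_0^{1-u}Q_{n,b}^{m,c}(u,v)\,dv\,du,\qquad j_{n,b}^{m,c}=\int_0^1 Q_{n,b}^{m,c}(u,1-u)\,du,$$ with the convention that $Q_{n,b}^{m,c}$, $\psi_{n,b}^{m,c}$, $j_{n,b}^{m,c}$ are zero whenever $n<0$ or $|m|>n$. Write $\mathbf{v}_1=(v_{1,x},v_{1,y},v_{1,z})^T$ and set $\xi_0=(v_{1,x}+i v_{1,y})/2$, $\eta_0=(v_{1,x}-i v_{1,y})/2$, $z_0=v_{1,z}$. Then for all integers $n\ge 0$, $|m|\le n$, $b\ge0$, $c\ge 0$, $$\psi_{n,b}^{m,c}=\frac{i\,\xi_0\,\psi_{n-1,b}^{m-1,c}+i\,\eta_0\,\psi_{n-1,b}^{m+1,c}-z_0\,\psi_{n-1,b}^{m,c}+j_{n,b}^{m,c}}{n+b+c+2}.$$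
   Context: The regular solid harmonics are defined for $n=0,1,2,\dots$, $m=-n,\dots,n$ by $$R_n^m(\mathbf{r})=\frac{(-1)^n i^{|m|}}{(n+|m|)!}\,r^n P_n^{|m|}(\cos\theta)\,e^{im\varphi},$$ where $(r,\theta,\varphi)$ are the spherical coordinates of $\mathbf{r}=(x,y,z)^T=r(\sin\theta\cos\varphi,\sin\theta\sin\varphi,\cos\theta)^T$, and for $m\ge 0$, $P_n^m(\mu)=\frac{(-1)^m(1-\mu^2)^{m/2}}{2^n n!}\frac{d^{m+n}}{d\mu^{m+n}}(\mu^2-1)^n$ are the associated Legendre functions. $R_n^m$ is taken to be $0$ when $|m|>n$ or $n<0$. *)

theory Defs
  imports "HOL-Analysis.Analysis"
begin

text \<open>Associated Legendre function P_n^m for m \<ge> 0, via the Rodrigues-type formula;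
  the factor (1 - mu^2)^(m/2) is written as sqrt(1 - mu^2)^m (they agree on [-1,1]).\<close>
definition assoc_legendre :: "nat \<Rightarrow> nat \<Rightarrow> real \<Rightarrow> real" where
  "assoc_legendre n m \<mu> =
     (-1) ^ m * sqrt (1 - \<mu>\<^sup>2) ^ m / (2 ^ n * fact n)
     * (deriv ^^ (m + n)) (\<lambda>t. (t\<^sup>2 - 1) ^ n) \<mu>"

definition sph_theta :: "real ^ 3 \<Rightarrow> real" where
  "sph_theta r = (if norm r = 0 then 0 else arccos (r $ 3 / norm r))"

definition sph_phi :: "real ^ 3 \<Rightarrow> real" where
  "sph_phi r = Arg (Complex (r $ 1) (r $ 2))"

definition solid_R :: "int \<Rightarrow> int \<Rightarrow> real ^ 3 \<Rightarrow> complex" where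
  "solid_R n m r =
     (if n < 0 \<or> \<bar>m\<bar> > n then 0
      else ((-1) ^ nat n * \<i> ^ nat \<bar>m\<bar> / fact (nat (n + \<bar>m\<bar>)))
           * complex_of_real (norm r ^ nat n * assoc_legendre (nat n) (nat \<bar>m\<bar>) (cos (sph_theta r)))
           * exp (\<i> * of_int m * complex_of_real (sph_phi r)))"

definition r_q :: "real ^ 3 \<Rightarrow> real ^ 3 \<Rightarrow> real ^ 3 \<Rightarrow> real \<Rightarrow> real \<Rightarrow> real ^ 3" where
  "r_q v1 ru rv u v = u *\<^sub>R ru + v *\<^sub>R rv + v1"

definition Q_fun :: "real ^ 3 \<Rightarrow> real ^ 3 \<Rightarrow> real ^ 3 \<Rightarrow> int \<Rightarrow> int \<Rightarrow> nat \<Rightarrow> nat \<Rightarrow> real \<Rightarrow> real \<Rightarrow> complex" where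
  "Q_fun v1 ru rv n m b c u v = solid_R n m (r_q v1 ru rv u v) * complex_of_real (u ^ b * v ^ c)"

definition psi :: "real ^ 3 \<Rightarrow> real ^ 3 \<Rightarrow> real ^ 3 \<Rightarrow> int \<Rightarrow> int \<Rightarrow> nat \<Rightarrow> nat \<Rightarrow> complex" where
  "psi v1 ru rv n m b c =
     integral {0..1} (\<lambda>u. integral {0..1 - u} (\<lambda>v. Q_fun v1 ru rv n m b c u v))"

definition j_fun :: "real ^ 3 \<Rightarrow> real ^ 3 \<Rightarrow> real ^ 3 \<Rightarrow> int \<Rightarrow> int \<Rightarrow> nat \<Rightarrow> nat \<Rightarrow> complex" where
  "j_fun v1 ru rv n m b c = integral {0..1} (\<lambda>u. Q_fun v1 ru rv n m b c u (1 - u))"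

end

(*
  In the coordinates xi = (x + iy)/2, eta = (x - iy)/2 and z, the regular solid harmonic R_n^m is
  the homogeneous polynomial of degree n
      sum of i^(a+b) (-1)^s xi^a eta^b z^s / (a! b! s!)  over  a + b + s = n, a - b = m;
  this follows from the Rodrigues formula for P_n^m once the (n+|m|)-th derivative of (mu^2 - 1)^n
  is expanded in the products (1 - mu^2)^q mu^k. Hence d/dxi R_n^m = i R_(n-1)^(m-1),
  d/deta R_n^m = i R_(n-1)^(m+1), d/dz R_n^m = - R_(n-1)^m, and by Euler's identity the derivative
  of R_n^m at r in the direction r is n R_n^m(r).

  At r = u r_u + v r_v + v_1 this derivative is (u d/du + v d/dv) R_n^m + D_(v_1) R_n^m. For
  G = R_n^m u^b v^c, the integrand (u d/du + v d/dv + 2) G = div((u, v) G) integrates over the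
  triangle to the flux through the hypotenuse u + v = 1, which is j; the term u^b v^c D_(v_1) R_n^m
  integrates to i xi_0 psi_(n-1)^(m-1) + i eta_0 psi_(n-1)^(m+1) - z_0 psi_(n-1)^m. The triangle is
  pulled back to the unit square by v = (1 - u) t, where the divergence theorem becomes the
  fundamental theorem of calculus in each variable.
*)
theory Submission
  imports Defs
begin

lemma sum_reindex_support:
  assumes "finite T" "inj_on h S" "h ` S \<subseteq> T" "\<And>t. t \<in> T - h ` S \<Longrightarrow> f t = 0"
  shows "sum f T = sum (f \<circ> h) S"
  using assms by (metis sum.mono_neutral_right sum.reindex)

section \<open>Solid harmonics as polynomials in \<open>\<xi>\<close>, \<open>\<eta>\<close>, \<open>z\<close>\<close>

definition harm_coeff :: "nat \<Rightarrow> nat \<Rightarrow> nat \<Rightarrow> complex" where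
  "harm_coeff a b s = \<i> ^ (a + b) * (-1) ^ s / (fact a * fact b * fact s)"

definition harm_exps :: "int \<Rightarrow> int \<Rightarrow> (nat \<times> nat \<times> nat) set" where
  "harm_exps n m = {(a, b, s). int a + int b + int s = n \<and> int a - int b = m}"

definition harm_poly :: "int \<Rightarrow> int \<Rightarrow> complex \<Rightarrow> complex \<Rightarrow> complex \<Rightarrow> complex" where
  "harm_poly n m X Y Z = (\<Sum>(a, b, s)\<in>harm_exps n m. harm_coeff a b s * X ^ a * Y ^ b * Z ^ s)"

definition harm_poly_deriv ::
    "int \<Rightarrow> int \<Rightarrow> complex \<Rightarrow> complex \<Rightarrow> complex \<Rightarrow> complex \<Rightarrow> complex \<Rightarrow> complex \<Rightarrow> complex" where
  "harm_poly_deriv n m X Y Z A B C =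
     \<i> * A * harm_poly (n - 1) (m - 1) X Y Z + \<i> * B * harm_poly (n - 1) (m + 1) X Y Z
     - C * harm_poly (n - 1) m X Y Z"

lemma finite_harm_exps [simp]: "finite (harm_exps n m)"
proof -
  have "harm_exps n m \<subseteq> {..nat n} \<times> {..nat n} \<times> {..nat n}"
    by (auto simp: harm_exps_def)
  then show ?thesis
    by (rule finite_subset) auto
qed

lemma harm_exps_eq_empty: "n < 0 \<or> \<bar>m\<bar> > n \<Longrightarrow> harm_exps n m = {}"
  by (auto simp: harm_exps_def)

lemma harm_coeff_Suc_fst: "harm_coeff (Suc a) b s * of_nat (Suc a) = \<i> * harm_coeff a b s"
  by (simp add: harm_coeff_def field_simps del: of_nat_Suc)

lemma harm_coeff_Suc_snd: "harm_coeff a (Suc b) s * of_nat (Suc b) = \<i> * harm_coeff a b s"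
  by (simp add: harm_coeff_def field_simps del: of_nat_Suc)

lemma harm_coeff_Suc_thd: "harm_coeff a b (Suc s) * of_nat (Suc s) = - harm_coeff a b s"
  by (simp add: harm_coeff_def field_simps del: of_nat_Suc)

lemma harm_poly_partial_X:
  "(\<Sum>(a, b, s)\<in>harm_exps n m. harm_coeff a b s * (of_nat a * X ^ (a - 1)) * Y ^ b * Z ^ s)
     = \<i> * harm_poly (n - 1) (m - 1) X Y Z" (is "sum ?f _ = _")
proof -
  let ?sh = "\<lambda>(a, b, s). (Suc a, b, s)"
  have "?f t = 0" if "t \<in> harm_exps n m - ?sh ` harm_exps (n - 1) (m - 1)" for t
  proof -
    obtain a b s where t: "t = (a, b, s)"
      by (cases t)
    have "a = 0"
      using that unfolding t by (cases a) (auto simp: harm_exps_def image_iff)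
    then show ?thesis
      by (simp add: t)
  qed
  then have "sum ?f (harm_exps n m) = sum (?f \<circ> ?sh) (harm_exps (n - 1) (m - 1))"
    by (intro sum_reindex_support finite_harm_exps) (auto simp: harm_exps_def inj_on_def)
  also have "\<dots> = \<i> * harm_poly (n - 1) (m - 1) X Y Z"
    unfolding harm_poly_def sum_distrib_left
    by (intro sum.cong) (auto simp flip: harm_coeff_Suc_fst simp del: of_nat_Suc)
  finally show ?thesis .
qed

lemma harm_poly_partial_Y:
  "(\<Sum>(a, b, s)\<in>harm_exps n m. harm_coeff a b s * X ^ a * (of_nat b * Y ^ (b - 1)) * Z ^ s)
     = \<i> * harm_poly (n - 1) (m + 1) X Y Z" (is "sum ?f _ = _")
proof -
  let ?sh = "\<lambda>(a, b, s). (a, Suc b, s)"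
  have "?f t = 0" if "t \<in> harm_exps n m - ?sh ` harm_exps (n - 1) (m + 1)" for t
  proof -
    obtain a b s where t: "t = (a, b, s)"
      by (cases t)
    have "b = 0"
      using that unfolding t by (cases b) (auto simp: harm_exps_def image_iff)
    then show ?thesis
      by (simp add: t)
  qed
  then have "sum ?f (harm_exps n m) = sum (?f \<circ> ?sh) (harm_exps (n - 1) (m + 1))"
    by (intro sum_reindex_support finite_harm_exps) (auto simp: harm_exps_def inj_on_def)
  also have "\<dots> = \<i> * harm_poly (n - 1) (m + 1) X Y Z"
    unfolding harm_poly_def sum_distrib_left
    by (intro sum.cong) (auto simp flip: harm_coeff_Suc_snd simp del: of_nat_Suc)
  finally show ?thesis .
qed

lemma harm_poly_partial_Z:
  "(\<Sum>(a, b, s)\<in>harm_exps n m. harm_coeff a b s * X ^ a * Y ^ b * (of_nat s * Z ^ (s - 1)))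
     = - harm_poly (n - 1) m X Y Z" (is "sum ?f _ = _")
proof -
  let ?sh = "\<lambda>(a, b, s). (a, b, Suc s)"
  have "?f t = 0" if "t \<in> harm_exps n m - ?sh ` harm_exps (n - 1) m" for t
  proof -
    obtain a b s where t: "t = (a, b, s)"
      by (cases t)
    have "s = 0"
      using that unfolding t by (cases s) (auto simp: harm_exps_def image_iff)
    then show ?thesis
      by (simp add: t)
  qed
  then have "sum ?f (harm_exps n m) = sum (?f \<circ> ?sh) (harm_exps (n - 1) m)"
    by (intro sum_reindex_support finite_harm_exps) (auto simp: harm_exps_def inj_on_def)
  also have "\<dots> = - harm_poly (n - 1) m X Y Z"
    unfolding harm_poly_def sum_negf[symmetric]
    by (intro sum.cong) (auto simp: minus_mult_left harm_coeff_Suc_thd[symmetric] simp del: of_nat_Suc)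
  finally show ?thesis .
qed

lemma harm_poly_line_deriv:
  "((\<lambda>w. harm_poly n m (X + w * A) (Y + w * B) (Z + w * C)) has_field_derivative
     harm_poly_deriv n m (X + w * A) (Y + w * B) (Z + w * C) A B C) (at w)"
proof -
  define X' Y' Z' where "X' = X + w * A" and "Y' = Y + w * B" and "Z' = Z + w * C"
  have "((\<lambda>w. harm_poly n m (X + w * A) (Y + w * B) (Z + w * C)) has_field_derivative
      (\<Sum>(a, b, s)\<in>harm_exps n m.
         A * (harm_coeff a b s * (of_nat a * X' ^ (a - 1)) * Y' ^ b * Z' ^ s)
       + B * (harm_coeff a b s * X' ^ a * (of_nat b * Y' ^ (b - 1)) * Z' ^ s)
       + C * (harm_coeff a b s * X' ^ a * Y' ^ b * (of_nat s * Z' ^ (s - 1))))) (at w)"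
    unfolding harm_poly_def X'_def Y'_def Z'_def case_prod_unfold
    by (intro DERIV_sum) (auto intro!: derivative_eq_intros simp: algebra_simps)
  also have "(\<Sum>(a, b, s)\<in>harm_exps n m.
         A * (harm_coeff a b s * (of_nat a * X' ^ (a - 1)) * Y' ^ b * Z' ^ s)
       + B * (harm_coeff a b s * X' ^ a * (of_nat b * Y' ^ (b - 1)) * Z' ^ s)
       + C * (harm_coeff a b s * X' ^ a * Y' ^ b * (of_nat s * Z' ^ (s - 1))))
      = A * (\<Sum>(a, b, s)\<in>harm_exps n m. harm_coeff a b s * (of_nat a * X' ^ (a - 1)) * Y' ^ b * Z' ^ s)
      + B * (\<Sum>(a, b, s)\<in>harm_exps n m. harm_coeff a b s * X' ^ a * (of_nat b * Y' ^ (b - 1)) * Z' ^ s)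
      + C * (\<Sum>(a, b, s)\<in>harm_exps n m. harm_coeff a b s * X' ^ a * Y' ^ b * (of_nat s * Z' ^ (s - 1)))"
    by (simp add: sum.distrib sum_distrib_left case_prod_unfold)
  also have "\<dots> = harm_poly_deriv n m X' Y' Z' A B C"
    unfolding harm_poly_partial_X harm_poly_partial_Y harm_poly_partial_Z harm_poly_deriv_def
    by (simp add: algebra_simps)
  finally show ?thesis
    by (simp only: X'_def Y'_def Z'_def)
qed

lemma harm_poly_homogeneous:
  "harm_poly n m (w * X) (w * Y) (w * Z) = w ^ nat n * harm_poly n m X Y Z"
  unfolding harm_poly_def sum_distrib_left
proof (intro sum.cong refl, clarify)
  fix a b s assume "(a, b, s) \<in> harm_exps n m"
  then have "nat n = a + b + s"
    by (auto simp: harm_exps_def)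
  then show "harm_coeff a b s * (w * X) ^ a * (w * Y) ^ b * (w * Z) ^ s
      = w ^ nat n * (harm_coeff a b s * X ^ a * Y ^ b * Z ^ s)"
    by (simp add: power_mult_distrib power_add)
qed

lemma harm_poly_euler: "harm_poly_deriv n m X Y Z X Y Z = of_int n * harm_poly n m X Y Z"
proof -
  have "((\<lambda>w. harm_poly n m (0 + w * X) (0 + w * Y) (0 + w * Z)) has_field_derivative
      harm_poly_deriv n m X Y Z X Y Z) (at 1)"
    using harm_poly_line_deriv[of n m 0 X 0 Y 0 Z 1] by simp
  moreover have "((\<lambda>w. harm_poly n m (0 + w * X) (0 + w * Y) (0 + w * Z)) has_field_derivative
      of_nat (nat n) * harm_poly n m X Y Z) (at 1)"
    unfolding add_0 harm_poly_homogeneous by (auto intro!: derivative_eq_intros)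
  ultimately have "harm_poly_deriv n m X Y Z X Y Z = of_nat (nat n) * harm_poly n m X Y Z"
    by (rule DERIV_unique)
  then show ?thesis
    by (cases "n < 0") (simp_all add: harm_poly_def harm_exps_eq_empty)
qed

section \<open>Higher derivatives in the Rodrigues formula\<close>

(* Extended by zero to negative arguments, so that the recursion rodrigues_coeff_Suc needs no case
   distinction at the ends of the summation range. *)
definition trunc_inv_fact :: "int \<Rightarrow> real" where
  "trunc_inv_fact k = (if k < 0 then 0 else 1 / fact (nat k))"

definition trunc_pow :: "real \<Rightarrow> int \<Rightarrow> real" where
  "trunc_pow x k = (if k < 0 then 0 else x ^ nat k)"

lemma trunc_inv_fact_pred: "trunc_inv_fact (k - 1) = of_int k * trunc_inv_fact k"
proof (cases "k \<le> 0")
  case True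
  then show ?thesis
    by (cases "k = 0") (auto simp: trunc_inv_fact_def)
next
  case False
  then obtain j where j: "k - 1 = int j"
    using zero_le_imp_eq_int[of "k - 1"] by auto
  then have "k = int (Suc j)"
    by simp
  then show ?thesis
    unfolding j by (simp add: trunc_inv_fact_def del: of_nat_Suc)
qed

lemma trunc_inv_fact_nonzero: "trunc_inv_fact k \<noteq> 0 \<Longrightarrow> k \<ge> 0"
  by (auto simp: trunc_inv_fact_def split: if_splits)

lemma trunc_pow_of_nat [simp]: "trunc_pow x (int k) = x ^ k"
  by (simp add: trunc_pow_def)

lemma mult_trunc_pow: "k \<ge> 0 \<Longrightarrow> x * trunc_pow x k = trunc_pow x (k + 1)"
  by (auto simp: trunc_pow_def nat_add_distrib)

lemma has_real_derivative_trunc_pow: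
  "((\<lambda>x. trunc_pow x k) has_real_derivative of_int k * trunc_pow x (k - 1)) (at x)"
proof (cases "k \<le> 0")
  case True
  then have "(\<lambda>x. trunc_pow x k) = (\<lambda>_. trunc_pow 0 k)"
    and "of_int k * trunc_pow x (k - 1) = 0"
    by (auto simp: trunc_pow_def)
  then show ?thesis
    by (simp only: DERIV_const)
next
  case False
  then have "(\<lambda>x. trunc_pow x k) = (\<lambda>x. x ^ nat k)"
    by (auto simp: trunc_pow_def)
  moreover have "of_int k * trunc_pow x (k - 1) = real (nat k) * x ^ (nat k - 1)"
    using False by (auto simp: trunc_pow_def nat_diff_distrib)
  ultimately show ?thesis
    by (auto intro!: derivative_eq_intros)
qed

(* The K-th derivative of (mu^2 - 1)^N expanded in the products (1 - mu^2)^q mu^(2N-K-2q); for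
   K = N + M this makes rho^N P_N^M(z / rho) a polynomial in x^2 + y^2 and z. *)
definition rodrigues_coeff :: "nat \<Rightarrow> nat \<Rightarrow> nat \<Rightarrow> real" where
  "rodrigues_coeff N K q = fact K * fact N * 2 ^ (2 * N - K) * (-1 / 4) ^ q
     * trunc_inv_fact (int q + int K - int N) * trunc_inv_fact (int q)
     * trunc_inv_fact (2 * int N - int K - 2 * int q)"

definition rodrigues_deriv :: "nat \<Rightarrow> nat \<Rightarrow> real \<Rightarrow> real" where
  "rodrigues_deriv N K \<mu> = (\<Sum>q\<le>N. rodrigues_coeff N K q * (1 - \<mu>\<^sup>2) ^ q
     * trunc_pow \<mu> (2 * int N - int K - 2 * int q))"

lemma rodrigues_coeff_Suc:
  assumes "K + 1 \<le> 2 * N"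
  shows "rodrigues_coeff N (Suc K) q = - 2 * of_nat (Suc q) * rodrigues_coeff N K (Suc q)
           + of_int (2 * int N - int K - 2 * int q) * rodrigues_coeff N K q"
proof -
  define A where "A = int q + int K - int N"
  define E where "E = 2 * int N - int K - 2 * int q"
  define G where "G = fact K * fact N * 2 ^ (2 * N - Suc K) * (-1 / 4) ^ q
    * trunc_inv_fact (A + 1) * trunc_inv_fact (int q + 1) * trunc_inv_fact E"
  have pow2: "(2::real) ^ (2 * N - K) = 2 * 2 ^ (2 * N - Suc K)"
    using assms by (simp flip: power_Suc add: Suc_diff_Suc)
  have pred_q: "trunc_inv_fact (int q) = (real q + 1) * trunc_inv_fact (int q + 1)"
    using trunc_inv_fact_pred[of "int q + 1"] by simp
  have pred_E: "trunc_inv_fact (E - 1) = of_int E * trunc_inv_fact E"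
    by (rule trunc_inv_fact_pred)
  have "int q + int (Suc K) - int N = A + 1" "2 * int N - int (Suc K) - 2 * int q = E - 1"
    by (simp_all add: A_def E_def)
  then have coeff_SucK: "rodrigues_coeff N (Suc K) q = G * (real K + 1) * (real q + 1) * of_int E"
    unfolding rodrigues_coeff_def by (simp only: pred_q pred_E) (simp add: G_def mult_ac)
  have "int (Suc q) + int K - int N = A + 1" "2 * int N - int K - 2 * int (Suc q) = E - 1 - 1"
    by (simp_all add: A_def E_def)
  then have coeff_Sucq: "rodrigues_coeff N K (Suc q) = G * (- 1 / 2) * (of_int E - 1) * of_int E"
    unfolding rodrigues_coeff_def
    by (simp only: trunc_inv_fact_pred pred_E pow2) (simp add: G_def mult_ac add.commute)
  have "int q + int K - int N = A + 1 - 1" "2 * int N - int K - 2 * int q = E"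
    by (simp_all add: A_def E_def)
  then have coeff: "rodrigues_coeff N K q = G * 2 * (of_int A + 1) * (real q + 1)"
    unfolding rodrigues_coeff_def
    by (simp only: trunc_inv_fact_pred pred_q pow2) (simp add: G_def mult_ac)
  have "real K = of_int E + 2 * of_int A"
    by (simp add: A_def E_def)
  then show ?thesis
    unfolding E_def[symmetric] coeff_SucK coeff_Sucq coeff by (simp add: field_simps)
qed

lemma rodrigues_coeff_nonzero:
  "rodrigues_coeff N K q \<noteq> 0 \<Longrightarrow> 2 * int N - int K - 2 * int q \<ge> 0"
  by (auto simp: rodrigues_coeff_def dest: trunc_inv_fact_nonzero)

lemma sum_rodrigues_shift:
  "(\<Sum>q\<le>N. rodrigues_coeff N K q * (of_nat q * (1 - \<mu>\<^sup>2) ^ (q - 1) * (- 2 * \<mu>))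
      * trunc_pow \<mu> (2 * int N - int K - 2 * int q))
   = (\<Sum>q\<le>N. - 2 * of_nat (Suc q) * rodrigues_coeff N K (Suc q) * (1 - \<mu>\<^sup>2) ^ q
      * trunc_pow \<mu> (2 * int N - int K - 2 * int q - 1))"
proof -
  define c where "c = rodrigues_coeff N K"
  define e where "e q = 2 * int N - int K - 2 * int q" for q
  define f where "f q = c q * (of_nat q * (1 - \<mu>\<^sup>2) ^ (q - 1) * (- 2 * \<mu>)) * trunc_pow \<mu> (e q)" for q
  have "c (Suc N) = 0"
    by (simp add: c_def rodrigues_coeff_def trunc_inv_fact_def)
  then have "(\<Sum>q\<le>N. f q) = (\<Sum>q\<le>Suc N. f q)"
    by (simp add: f_def)
  also have "\<dots> = (\<Sum>q\<le>N. f (Suc q))"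
    by (simp only: sum.atMost_Suc_shift) (simp add: f_def)
  also have "\<dots> = (\<Sum>q\<le>N. - 2 * of_nat (Suc q) * c (Suc q) * (1 - \<mu>\<^sup>2) ^ q * trunc_pow \<mu> (e q - 1))"
  proof (intro sum.cong)
    fix q
    show "f (Suc q) = - 2 * of_nat (Suc q) * c (Suc q) * (1 - \<mu>\<^sup>2) ^ q * trunc_pow \<mu> (e q - 1)"
    proof (cases "c (Suc q) = 0")
      case False
      then have "\<mu> * trunc_pow \<mu> (e (Suc q)) = trunc_pow \<mu> (e q - 1)"
        using mult_trunc_pow[of "e (Suc q)" \<mu>] rodrigues_coeff_nonzero[of N K "Suc q"]
        by (simp add: c_def e_def algebra_simps)
      moreover have "f (Suc q)
          = - 2 * of_nat (Suc q) * c (Suc q) * (1 - \<mu>\<^sup>2) ^ q * (\<mu> * trunc_pow \<mu> (e (Suc q)))"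
        by (simp add: f_def algebra_simps)
      ultimately show ?thesis
        by simp
    qed (simp add: f_def)
  qed simp
  finally show ?thesis
    by (simp only: f_def c_def e_def)
qed

lemma has_real_derivative_rodrigues_deriv:
  assumes "K + 1 \<le> 2 * N"
  shows "(rodrigues_deriv N K has_real_derivative rodrigues_deriv N (Suc K) \<mu>) (at \<mu>)"
proof -
  define c where "c = rodrigues_coeff N K"
  define e where "e q = 2 * int N - int K - 2 * int q" for q
  define f where "f q = c q * (of_nat q * (1 - \<mu>\<^sup>2) ^ (q - 1) * (- 2 * \<mu>)) * trunc_pow \<mu> (e q)" for q
  define g where "g q = c q * (1 - \<mu>\<^sup>2) ^ q * (of_int (e q) * trunc_pow \<mu> (e q - 1))" for q
  have "((\<lambda>\<mu>. c q * (1 - \<mu>\<^sup>2) ^ q * trunc_pow \<mu> (e q)) has_real_derivative f q + g q) (at \<mu>)" for q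
  proof -
    have "((\<lambda>\<mu>. (1 - \<mu>\<^sup>2) ^ q) has_real_derivative of_nat q * (1 - \<mu>\<^sup>2) ^ (q - 1) * (- 2 * \<mu>)) (at \<mu>)"
      by (auto intro!: derivative_eq_intros)
    from DERIV_cmult[OF DERIV_mult'[OF this has_real_derivative_trunc_pow[where k = "e q"]], of "c q"]
    show ?thesis
      by (simp add: f_def g_def algebra_simps)
  qed
  then have "(rodrigues_deriv N K has_real_derivative (\<Sum>q\<le>N. f q) + (\<Sum>q\<le>N. g q)) (at \<mu>)"
    unfolding rodrigues_deriv_def[abs_def] sum.distrib[symmetric] c_def e_def by (intro DERIV_sum)
  also have "(\<Sum>q\<le>N. f q) + (\<Sum>q\<le>N. g q) = rodrigues_deriv N (Suc K) \<mu>"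
    unfolding f_def c_def e_def sum_rodrigues_shift
    unfolding rodrigues_deriv_def rodrigues_coeff_Suc[OF assms] sum.distrib[symmetric]
    by (intro sum.cong) (simp_all add: g_def c_def e_def algebra_simps)
  finally show ?thesis .
qed

lemma rodrigues_deriv_0: "rodrigues_deriv N 0 \<mu> = (\<mu>\<^sup>2 - 1) ^ N"
proof -
  have "rodrigues_deriv N 0 \<mu> = rodrigues_coeff N 0 N * (1 - \<mu>\<^sup>2) ^ N"
    unfolding rodrigues_deriv_def lessThan_Suc_atMost[symmetric] sum.lessThan_Suc
    by (auto simp: rodrigues_coeff_def trunc_inv_fact_def trunc_pow_def intro!: sum.neutral)
  also have "rodrigues_coeff N 0 N = (-1) ^ N"
    by (simp add: rodrigues_coeff_def trunc_inv_fact_def power_mult flip: power_mult_distrib)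
  finally show ?thesis
    by (simp flip: power_mult_distrib)
qed

lemma higher_deriv_rodrigues:
  "K \<le> 2 * N \<Longrightarrow> (deriv ^^ K) (\<lambda>t. (t\<^sup>2 - 1) ^ N) = rodrigues_deriv N K"
proof (induction K)
  case 0
  then show ?case
    by (simp add: rodrigues_deriv_0)
next
  case (Suc K)
  then have "(deriv ^^ Suc K) (\<lambda>t. (t\<^sup>2 - 1) ^ N) = deriv (rodrigues_deriv N K)"
    by simp
  also have "\<dots> = rodrigues_deriv N (Suc K)"
    using has_real_derivative_rodrigues_deriv Suc.prems by (intro ext DERIV_imp_deriv) simp
  finally show ?case .
qed

section \<open>From spherical coordinates to the polynomial form\<close>

definition xi :: "real ^ 3 \<Rightarrow> complex" where
  "xi x = (complex_of_real (x $ 1) + \<i> * complex_of_real (x $ 2)) / 2"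

definition eta :: "real ^ 3 \<Rightarrow> complex" where
  "eta x = (complex_of_real (x $ 1) - \<i> * complex_of_real (x $ 2)) / 2"

definition zeta :: "real ^ 3 \<Rightarrow> complex" where
  "zeta x = complex_of_real (x $ 3)"

lemma cos_sph_theta: "x \<noteq> 0 \<Longrightarrow> cos (sph_theta x) = x $ 3 / norm x"
proof -
  assume x: "x \<noteq> 0"
  have "\<bar>x $ 3\<bar> \<le> norm x"
    by (rule component_le_norm_cart)
  then have "\<bar>x $ 3 / norm x\<bar> \<le> 1"
    using x by (subst abs_divide) (simp add: divide_le_eq_1)
  then have "cos (arccos (x $ 3 / norm x)) = x $ 3 / norm x"
    by (rule cos_arccos_abs)
  then show ?thesis
    using x by (simp add: sph_theta_def)
qed

lemma cmod_pow_exp_Arg: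
  "complex_of_real (cmod w ^ nat \<bar>m\<bar>) * exp (\<i> * of_int m * complex_of_real (Arg w))
     = (if 0 \<le> m then w else cnj w) ^ nat \<bar>m\<bar>"
proof -
  define M where "M = nat \<bar>m\<bar>"
  have w: "complex_of_real (cmod w) * cis (Arg w) = w"
    using rcis_cmod_Arg[of w] by (simp add: rcis_def)
  show ?thesis
  proof (cases "0 \<le> m")
    case True
    then have "\<i> * of_int m * complex_of_real (Arg w) = of_nat M * (\<i> * complex_of_real (Arg w))"
      by (simp add: M_def)
    then have "exp (\<i> * of_int m * complex_of_real (Arg w)) = cis (Arg w) ^ M"
      by (simp only: cis_conv_exp exp_of_nat_mult)
    then show ?thesis
      using True w by (simp add: M_def flip: power_mult_distrib)
  next
    case False
    then have "\<i> * of_int m * complex_of_real (Arg w) = of_nat M * (\<i> * complex_of_real (- Arg w))"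
      by (simp add: M_def)
    then have "exp (\<i> * of_int m * complex_of_real (Arg w)) = cis (- Arg w) ^ M"
      by (simp only: cis_conv_exp exp_of_nat_mult)
    moreover have "complex_of_real (cmod w) * cis (- Arg w) = cnj w"
      using arg_cong[OF w, of cnj] by (simp add: cis_cnj)
    ultimately show ?thesis
      using False by (simp add: M_def flip: power_mult_distrib)
  qed
qed

lemma scaled_legendre_monomial:
  fixes \<rho> S z :: real
  assumes "\<rho> > 0" "\<rho>\<^sup>2 = S + z\<^sup>2" "S \<ge> 0"
  shows "\<rho> ^ (M + 2 * q + s) * (sqrt (1 - (z / \<rho>)\<^sup>2) ^ M * (1 - (z / \<rho>)\<^sup>2) ^ q * (z / \<rho>) ^ s)
     = sqrt S ^ M * S ^ q * z ^ s"
proof -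
  have "1 - (z / \<rho>)\<^sup>2 = (\<rho>\<^sup>2 - z\<^sup>2) / \<rho>\<^sup>2"
    using assms(1) by (simp add: power_divide field_simps)
  then have S: "1 - (z / \<rho>)\<^sup>2 = S / \<rho>\<^sup>2"
    using assms(2) by simp
  then have sqrt_S: "sqrt (1 - (z / \<rho>)\<^sup>2) = sqrt S / \<rho>"
    using assms(1) by (simp add: real_sqrt_divide)
  have "\<rho> ^ (M + 2 * q + s) * (sqrt (1 - (z / \<rho>)\<^sup>2) ^ M * (1 - (z / \<rho>)\<^sup>2) ^ q * (z / \<rho>) ^ s)
     = (\<rho> * (sqrt S / \<rho>)) ^ M * (\<rho>\<^sup>2 * (S / \<rho>\<^sup>2)) ^ q * (\<rho> * (z / \<rho>)) ^ s"
    unfolding sqrt_S unfolding S power_add power_mult by (simp only: power_mult_distrib mult_ac)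
  then show ?thesis
    using assms(1) by simp
qed

lemma norm_pow_assoc_legendre:
  fixes x :: "real ^ 3"
  assumes x: "x \<noteq> 0" and "M \<le> N"
  defines "S \<equiv> (x $ 1)\<^sup>2 + (x $ 2)\<^sup>2"
  shows "norm x ^ N * assoc_legendre N M (cos (sph_theta x))
     = (-1) ^ M / (2 ^ N * fact N) * sqrt S ^ M
       * (\<Sum>q\<le>N. rodrigues_coeff N (M + N) q * S ^ q * trunc_pow (x $ 3) (int N - int M - 2 * int q))"
proof -
  define \<rho> z where "\<rho> = norm x" and "z = x $ 3"
  have \<rho>: "\<rho> > 0" "\<rho>\<^sup>2 = S + z\<^sup>2"
    using x by (simp_all add: \<rho>_def) (simp add: \<rho>_def S_def z_def norm_vec_def L2_set_def sum_3)
  have e: "2 * int N - int (M + N) - 2 * int q = int N - int M - 2 * int q" for q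
    by simp
  have termwise: "\<rho> ^ N * (sqrt (1 - (z / \<rho>)\<^sup>2) ^ M
        * (rodrigues_coeff N (M + N) q * (1 - (z / \<rho>)\<^sup>2) ^ q
           * trunc_pow (z / \<rho>) (int N - int M - 2 * int q)))
      = sqrt S ^ M * (rodrigues_coeff N (M + N) q * S ^ q * trunc_pow z (int N - int M - 2 * int q))"
    for q
  proof (cases "rodrigues_coeff N (M + N) q = 0")
    case False
    then obtain s where s: "int N - int M - 2 * int q = int s"
      using rodrigues_coeff_nonzero[OF False] zero_le_imp_eq_int by fastforce
    then have "N = M + 2 * q + s"
      by linarith
    then show ?thesis
      using scaled_legendre_monomial[OF \<rho> _, of M q s] unfolding s
      by (simp add: S_def algebra_simps)
  qed simp
  have "norm x ^ N * assoc_legendre N M (cos (sph_theta x))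
      = \<rho> ^ N * ((-1) ^ M * sqrt (1 - (z / \<rho>)\<^sup>2) ^ M / (2 ^ N * fact N)
          * rodrigues_deriv N (M + N) (z / \<rho>))"
    using assms(2)
    by (simp add: cos_sph_theta[OF x] assoc_legendre_def higher_deriv_rodrigues \<rho>_def z_def)
  also have "\<dots> = (-1) ^ M / (2 ^ N * fact N) * (\<Sum>q\<le>N. \<rho> ^ N * (sqrt (1 - (z / \<rho>)\<^sup>2) ^ M
      * (rodrigues_coeff N (M + N) q * (1 - (z / \<rho>)\<^sup>2) ^ q
         * trunc_pow (z / \<rho>) (int N - int M - 2 * int q))))"
    by (simp add: rodrigues_deriv_def e sum_distrib_left mult_ac)
  also have "\<dots> = (-1) ^ M / (2 ^ N * fact N) * sqrt S ^ M
      * (\<Sum>q\<le>N. rodrigues_coeff N (M + N) q * S ^ q * trunc_pow (x $ 3) (int N - int M - 2 * int q))"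
    unfolding termwise by (simp add: sum_distrib_left z_def mult_ac)
  finally show ?thesis .
qed

lemma harm_poly_eq_sum_pairs:
  assumes "0 \<le> n" "\<bar>m\<bar> \<le> n"
  defines "N \<equiv> nat n" and "M \<equiv> nat \<bar>m\<bar>"
  shows "harm_poly n m X Y Z = (\<Sum>q | M + 2 * q \<le> N. harm_coeff (q + M) q (N - M - 2 * q)
           * (X * Y) ^ q * (if 0 \<le> m then X else Y) ^ M * Z ^ (N - M - 2 * q))"
proof -
  define h where "h q = (if 0 \<le> m then (q + M, q, N - M - 2 * q) else (q, q + M, N - M - 2 * q))" for q
  have "bij_betw h {q. M + 2 * q \<le> N} (harm_exps n m)"
    by (rule bij_betw_byWitness[where f' = "\<lambda>(a, b, s). min a b"])
       (use assms in \<open>auto simp: h_def harm_exps_def N_def M_def\<close>)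
  then have "harm_poly n m X Y Z
      = (\<Sum>q | M + 2 * q \<le> N. (\<lambda>(a, b, s). harm_coeff a b s * X ^ a * Y ^ b * Z ^ s) (h q))"
    unfolding harm_poly_def by (simp only: sum.reindex_bij_betw)
  also have "\<dots> = (\<Sum>q | M + 2 * q \<le> N. harm_coeff (q + M) q (N - M - 2 * q)
           * (X * Y) ^ q * (if 0 \<le> m then X else Y) ^ M * Z ^ (N - M - 2 * q))"
    by (intro sum.cong) (auto simp: h_def harm_coeff_def power_add power_mult_distrib ac_simps)
  finally show ?thesis .
qed

lemma rodrigues_coeff_eq_harm_coeff:
  assumes "M + 2 * q \<le> N"
  shows "(-1) ^ (N + M) * \<i> ^ M * 2 ^ M * 4 ^ q * complex_of_real (rodrigues_coeff N (M + N) q)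
           / (2 ^ N * fact N * fact (M + N))
         = harm_coeff (q + M) q (N - M - 2 * q)"
proof -
  define s where "s = N - M - 2 * q"
  have N: "N = s + M + 2 * q"
    using assms by (simp add: s_def)
  have "(2::real) ^ (2 * q) * (-1 / 4) ^ q = (-1) ^ q"
    by (simp add: power_mult flip: power_mult_distrib)
  then have c: "rodrigues_coeff N (M + N) q = fact (M + N) * fact N * 2 ^ s * (-1) ^ q
      / (fact (q + M) * fact q * fact s)"
    unfolding rodrigues_coeff_def N by (simp add: power_add trunc_inv_fact_def nat_add_distrib)
  have "(2::complex) ^ N = 2 ^ s * 2 ^ M * 4 ^ q"
    unfolding N by (simp add: power_add power_mult)
  moreover have "(-1::complex) ^ (N + M) = (-1) ^ s"
    unfolding N by (simp add: power_add power_mult)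
  moreover have "\<i> ^ (q + M + q) = (-1) ^ q * \<i> ^ M"
    by (metis add.commute i_squared power_add power_mult power2_eq_square mult_2 add.assoc)
  ultimately show ?thesis
    unfolding harm_coeff_def c s_def[symmetric] by (simp add: field_simps)
qed

lemma cnj_xi: "cnj (xi x) = eta x"
  by (simp add: xi_def eta_def)

lemma sqrt_pow_exp_sph_phi:
  "complex_of_real (sqrt ((x $ 1)\<^sup>2 + (x $ 2)\<^sup>2) ^ nat \<bar>m\<bar>)
     * exp (\<i> * of_int m * complex_of_real (sph_phi x))
     = 2 ^ nat \<bar>m\<bar> * (if 0 \<le> m then xi x else eta x) ^ nat \<bar>m\<bar>"
proof -
  have "sqrt ((x $ 1)\<^sup>2 + (x $ 2)\<^sup>2) = cmod (Complex (x $ 1) (x $ 2))"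
    by (simp add: complex_norm)
  then have "complex_of_real (sqrt ((x $ 1)\<^sup>2 + (x $ 2)\<^sup>2) ^ nat \<bar>m\<bar>)
      * exp (\<i> * of_int m * complex_of_real (sph_phi x))
      = (if 0 \<le> m then Complex (x $ 1) (x $ 2) else cnj (Complex (x $ 1) (x $ 2))) ^ nat \<bar>m\<bar>"
    using cmod_pow_exp_Arg[of "Complex (x $ 1) (x $ 2)" m] by (simp only: sph_phi_def)
  also have "Complex (x $ 1) (x $ 2) = 2 * xi x"
    by (simp add: xi_def Complex_eq)
  finally show ?thesis
    by (simp add: cnj_xi power_mult_distrib)
qed

lemma sum_sq_eq_xi_eta: "complex_of_real ((x $ 1)\<^sup>2 + (x $ 2)\<^sup>2) = 4 * (xi x * eta x)"
  by (simp add: xi_def eta_def field_simps power2_eq_square)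

lemma solid_R_eq_harm_poly_nonzero:
  assumes "0 \<le> n" "\<bar>m\<bar> \<le> n" and x: "x \<noteq> 0"
  shows "solid_R n m x = harm_poly n m (xi x) (eta x) (zeta x)"
proof -
  define N M where "N = nat n" and "M = nat \<bar>m\<bar>"
  define S where "S = (x $ 1)\<^sup>2 + (x $ 2)\<^sup>2"
  define V where "V = (if 0 \<le> m then xi x else eta x)"
  define B :: complex where "B = (-1) ^ (N + M) * \<i> ^ M / (2 ^ N * fact N * fact (M + N))"
  define e where "e q = int N - int M - 2 * int q" for q
  have MN: "M \<le> N" and nM: "nat (n + \<bar>m\<bar>) = M + N"
    using assms by (simp_all add: N_def M_def nat_mono nat_add_distrib)
  have angular: "complex_of_real (sqrt S ^ M) * exp (\<i> * of_int m * complex_of_real (sph_phi x))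
      = 2 ^ M * V ^ M"
    unfolding S_def M_def V_def by (rule sqrt_pow_exp_sph_phi)
  have "solid_R n m x = (-1) ^ N * \<i> ^ M / fact (M + N)
      * complex_of_real (norm x ^ N * assoc_legendre N M (cos (sph_theta x)))
      * exp (\<i> * of_int m * complex_of_real (sph_phi x))"
    using assms(1,2) by (simp add: solid_R_def nM N_def M_def)
  also have "\<dots> = B
      * complex_of_real (\<Sum>q\<le>N. rodrigues_coeff N (M + N) q * S ^ q * trunc_pow (x $ 3) (e q))
      * (complex_of_real (sqrt S ^ M) * exp (\<i> * of_int m * complex_of_real (sph_phi x)))"
    unfolding norm_pow_assoc_legendre[OF x MN, folded S_def e_def] B_def
    by (simp add: power_add field_simps)
  also have "\<dots> = (\<Sum>q\<le>N. B * 2 ^ M * complex_of_real (rodrigues_coeff N (M + N) q * S ^ q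
      * trunc_pow (x $ 3) (e q)) * V ^ M)"
    unfolding angular by (simp add: sum_distrib_left sum_distrib_right mult_ac)
  also have "\<dots> = (\<Sum>q | M + 2 * q \<le> N. harm_coeff (q + M) q (N - M - 2 * q)
      * (xi x * eta x) ^ q * V ^ M * zeta x ^ (N - M - 2 * q))"
  proof (rule sum.mono_neutral_cong_right)
    fix q assume "q \<in> {q. M + 2 * q \<le> N}"
    then have "M + 2 * q \<le> N"
      by simp
    then have "e q = int (N - M - 2 * q)"
      by (simp add: e_def)
    then have "trunc_pow (x $ 3) (e q) = x $ 3 ^ (N - M - 2 * q)"
      by (simp only: trunc_pow_of_nat)
    with \<open>M + 2 * q \<le> N\<close> show "B * 2 ^ M * complex_of_real (rodrigues_coeff N (M + N) q * S ^ q
        * trunc_pow (x $ 3) (e q)) * V ^ M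
      = harm_coeff (q + M) q (N - M - 2 * q) * (xi x * eta x) ^ q * V ^ M * zeta x ^ (N - M - 2 * q)"
      using rodrigues_coeff_eq_harm_coeff[of M q N] sum_sq_eq_xi_eta[of x, folded S_def]
      by (simp add: B_def zeta_def power_mult_distrib field_simps)
  qed (auto simp: e_def trunc_pow_def)
  also have "\<dots> = harm_poly n m (xi x) (eta x) (zeta x)"
    unfolding harm_poly_eq_sum_pairs[OF assms(1,2)] N_def[symmetric] M_def[symmetric] V_def ..
  finally show ?thesis .
qed

lemma solid_R_eq_harm_poly: "solid_R n m x = harm_poly n m (xi x) (eta x) (zeta x)"
proof (cases "n < 0 \<or> \<bar>m\<bar> > n")
  case True
  then show ?thesis
    by (simp add: solid_R_def harm_poly_def harm_exps_eq_empty)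
next
  case False
  then have n: "0 \<le> n" "\<bar>m\<bar> \<le> n"
    by auto
  show ?thesis
  proof (cases "x = 0")
    case False
    with n show ?thesis
      by (rule solid_R_eq_harm_poly_nonzero)
  next
    case True
    then have xyz: "xi x = 0" "eta x = 0" "zeta x = 0"
      by (simp_all add: xi_def eta_def zeta_def)
    show ?thesis
    proof (cases "n = 0")
      case True
      with n have "harm_exps n m = {(0, 0, 0)}"
        by (auto simp: harm_exps_def)
      with True n \<open>x = 0\<close> show ?thesis
        by (simp add: solid_R_def harm_poly_def harm_coeff_def assoc_legendre_def xyz)
    next
      case False
      with n \<open>x = 0\<close> have "solid_R n m x = 0"
        by (simp add: solid_R_def)
      moreover have "harm_poly n m 0 0 0 = 0"
        using harm_poly_homogeneous[of n m 0 1 1 1] False n by simp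
      ultimately show ?thesis
        by (simp add: xyz)
    qed
  qed
qed

section \<open>Directional derivatives\<close>

lemma continuous_on_solid_R [continuous_intros]:
  "continuous_on A f \<Longrightarrow> continuous_on A (\<lambda>z. solid_R n m (f z))"
  unfolding solid_R_eq_harm_poly harm_poly_def xi_def eta_def zeta_def case_prod_unfold
  by (intro continuous_intros) auto

definition solid_R_deriv :: "int \<Rightarrow> int \<Rightarrow> real ^ 3 \<Rightarrow> real ^ 3 \<Rightarrow> complex" where
  "solid_R_deriv n m y d =
     \<i> * xi d * solid_R (n - 1) (m - 1) y + \<i> * eta d * solid_R (n - 1) (m + 1) y
     - zeta d * solid_R (n - 1) m y"

lemma solid_R_deriv_eq_harm_poly_deriv:
  "solid_R_deriv n m y d = harm_poly_deriv n m (xi y) (eta y) (zeta y) (xi d) (eta d) (zeta d)"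
  by (simp add: solid_R_deriv_def harm_poly_deriv_def solid_R_eq_harm_poly mult_ac)

lemma xi_eta_zeta_add:
  "xi (a + d) = xi a + xi d" "eta (a + d) = eta a + eta d" "zeta (a + d) = zeta a + zeta d"
  by (simp_all add: xi_def eta_def zeta_def field_simps)

lemma xi_eta_zeta_scaleR:
  "xi (r *\<^sub>R d) = of_real r * xi d" "eta (r *\<^sub>R d) = of_real r * eta d"
  "zeta (r *\<^sub>R d) = of_real r * zeta d"
  by (simp_all add: xi_def eta_def zeta_def field_simps)

lemma solid_R_deriv_add: "solid_R_deriv n m y (d + e) = solid_R_deriv n m y d + solid_R_deriv n m y e"
  by (simp add: solid_R_deriv_def xi_eta_zeta_add algebra_simps)

lemma solid_R_deriv_scaleR: "solid_R_deriv n m y (r *\<^sub>R d) = r *\<^sub>R solid_R_deriv n m y d"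
  unfolding solid_R_deriv_def xi_eta_zeta_scaleR by (simp add: scaleR_conv_of_real algebra_simps)

lemma continuous_on_solid_R_deriv [continuous_intros]:
  "continuous_on A f \<Longrightarrow> continuous_on A (\<lambda>z. solid_R_deriv n m (f z) d)"
  unfolding solid_R_deriv_def by (intro continuous_intros)

lemma has_vector_derivative_solid_R_line:
  "((\<lambda>t. solid_R n m (p + t *\<^sub>R d)) has_vector_derivative solid_R_deriv n m (p + t *\<^sub>R d) d)
     (at t within S)"
proof -
  note lin = xi_eta_zeta_add xi_eta_zeta_scaleR
  have "((\<lambda>w. harm_poly n m (xi p + w * xi d) (eta p + w * eta d) (zeta p + w * zeta d))
      has_field_derivative solid_R_deriv n m (p + t *\<^sub>R d) d) (at (of_real t))"
    unfolding solid_R_deriv_eq_harm_poly_deriv lin by (rule harm_poly_line_deriv)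
  then show ?thesis
    unfolding solid_R_eq_harm_poly lin by (rule has_vector_derivative_real_field)
qed

lemma solid_R_deriv_self: "solid_R_deriv n m y y = of_int n * solid_R n m y"
  by (simp add: solid_R_deriv_eq_harm_poly_deriv harm_poly_euler solid_R_eq_harm_poly)

lemma Q_fun_eq_scaleR:
  "Q_fun v1 ru rv n m b c u v = (u ^ b * v ^ c) *\<^sub>R solid_R n m (r_q v1 ru rv u v)"
  by (simp add: Q_fun_def scaleR_conv_of_real mult.commute)

lemma continuous_on_Q_fun [continuous_intros]:
  "continuous_on S f \<Longrightarrow> continuous_on S g \<Longrightarrow>
    continuous_on S (\<lambda>x. Q_fun v1 ru rv n m b c (f x) (g x))"
  unfolding Q_fun_eq_scaleR r_q_def by (intro continuous_intros)

definition Q_fun_du ::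
    "real ^ 3 \<Rightarrow> real ^ 3 \<Rightarrow> real ^ 3 \<Rightarrow> int \<Rightarrow> int \<Rightarrow> nat \<Rightarrow> nat \<Rightarrow> real \<Rightarrow> real \<Rightarrow> complex" where
  "Q_fun_du v1 ru rv n m b c u v =
     (u ^ b * v ^ c) *\<^sub>R solid_R_deriv n m (r_q v1 ru rv u v) ru
     + (of_nat b * u ^ (b - 1) * v ^ c) *\<^sub>R solid_R n m (r_q v1 ru rv u v)"

definition Q_fun_dv ::
    "real ^ 3 \<Rightarrow> real ^ 3 \<Rightarrow> real ^ 3 \<Rightarrow> int \<Rightarrow> int \<Rightarrow> nat \<Rightarrow> nat \<Rightarrow> real \<Rightarrow> real \<Rightarrow> complex" where
  "Q_fun_dv v1 ru rv n m b c u v =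
     (u ^ b * v ^ c) *\<^sub>R solid_R_deriv n m (r_q v1 ru rv u v) rv
     + (of_nat c * u ^ b * v ^ (c - 1)) *\<^sub>R solid_R n m (r_q v1 ru rv u v)"

lemma Q_fun_line_deriv:
  "((\<lambda>s. Q_fun v1 ru rv n m b c (u + s * \<alpha>) (v + s * \<beta>)) has_vector_derivative
      \<alpha> *\<^sub>R Q_fun_du v1 ru rv n m b c (u + s * \<alpha>) (v + s * \<beta>)
      + \<beta> *\<^sub>R Q_fun_dv v1 ru rv n m b c (u + s * \<alpha>) (v + s * \<beta>)) (at s)"
proof -
  have r: "r_q v1 ru rv (u + s * \<alpha>) (v + s * \<beta>)
      = r_q v1 ru rv u v + s *\<^sub>R (\<alpha> *\<^sub>R ru + \<beta> *\<^sub>R rv)" for s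
    by (simp add: r_q_def algebra_simps)
  have "((\<lambda>s. solid_R n m (r_q v1 ru rv (u + s * \<alpha>) (v + s * \<beta>))) has_vector_derivative
      solid_R_deriv n m (r_q v1 ru rv (u + s * \<alpha>) (v + s * \<beta>)) (\<alpha> *\<^sub>R ru + \<beta> *\<^sub>R rv)) (at s)"
    unfolding r by (rule has_vector_derivative_solid_R_line)
  moreover have "((\<lambda>s. (u + s * \<alpha>) ^ b * (v + s * \<beta>) ^ c) has_real_derivative
      of_nat b * (u + s * \<alpha>) ^ (b - 1) * \<alpha> * (v + s * \<beta>) ^ c
      + (u + s * \<alpha>) ^ b * (of_nat c * (v + s * \<beta>) ^ (c - 1) * \<beta>)) (at s)"
    by (auto intro!: derivative_eq_intros)
  ultimately show ?thesis
    unfolding Q_fun_eq_scaleR Q_fun_du_def Q_fun_dv_def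
    by (auto dest: has_vector_derivative_scaleR
        simp: solid_R_deriv_add solid_R_deriv_scaleR algebra_simps)
qed

lemma Q_fun_euler:
  "u *\<^sub>R Q_fun_du v1 ru rv n m b c u v + v *\<^sub>R Q_fun_dv v1 ru rv n m b c u v
     = of_int (n + int b + int c) * Q_fun v1 ru rv n m b c u v
       - (u ^ b * v ^ c) *\<^sub>R solid_R_deriv n m (r_q v1 ru rv u v) v1"
proof -
  define y where "y = r_q v1 ru rv u v"
  have euler: "u *\<^sub>R solid_R_deriv n m y ru + v *\<^sub>R solid_R_deriv n m y rv
      = of_int n * solid_R n m y - solid_R_deriv n m y v1"
    by (simp add: solid_R_deriv_self[symmetric] y_def r_q_def solid_R_deriv_add solid_R_deriv_scaleR)
  have hb: "u * (of_nat b * u ^ (b - 1) * v ^ c) = of_nat b * (u ^ b * v ^ c)"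
    by (cases b) auto
  have hc: "v * (of_nat c * u ^ b * v ^ (c - 1)) = of_nat c * (u ^ b * v ^ c)"
    by (cases c) auto
  have "u *\<^sub>R Q_fun_du v1 ru rv n m b c u v + v *\<^sub>R Q_fun_dv v1 ru rv n m b c u v
      = (u ^ b * v ^ c) *\<^sub>R (u *\<^sub>R solid_R_deriv n m y ru + v *\<^sub>R solid_R_deriv n m y rv)
        + ((of_nat b + of_nat c) * (u ^ b * v ^ c)) *\<^sub>R solid_R n m y"
    unfolding Q_fun_du_def Q_fun_dv_def y_def[symmetric] scaleR_add_right scaleR_scaleR hb hc
    by (simp add: algebra_simps)
  then show ?thesis
    unfolding euler Q_fun_eq_scaleR y_def[symmetric] by (simp add: scaleR_conv_of_real algebra_simps)
qed

section \<open>Integration over the triangle\<close>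

definition square_integral :: "(real \<Rightarrow> real \<Rightarrow> 'a::banach) \<Rightarrow> 'a" where
  "square_integral F = integral {0..1} (\<lambda>u. integral {0..1} (\<lambda>t. F u t))"

lemma square_integral_eq_integral:
  assumes "continuous_on (cbox (0, 0) (1, 1)) (\<lambda>(u, t). F u t)"
  shows "square_integral F = integral (cbox (0, 0) (1, 1)) (\<lambda>(u, t). F u t)"
  using integral_prod_continuous[OF assms] by (simp add: square_integral_def cbox_interval)

lemma square_integral_add:
  assumes "continuous_on (cbox (0, 0) (1, 1)) (\<lambda>(u, t). F u t)"
    and "continuous_on (cbox (0, 0) (1, 1)) (\<lambda>(u, t). G u t)"
  shows "square_integral (\<lambda>u t. F u t + G u t) = square_integral F + square_integral G"
proof -
  have "continuous_on (cbox (0, 0) (1, 1)) (\<lambda>(u, t). F u t + G u t)"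
    using continuous_on_add[OF assms] by (simp add: case_prod_unfold)
  with assms show ?thesis
    by (simp add: square_integral_eq_integral case_prod_unfold integrable_continuous integral_add)
qed

lemma square_integral_cong:
  "(\<And>u t. u \<in> {0..1} \<Longrightarrow> t \<in> {0..1} \<Longrightarrow> F u t = G u t) \<Longrightarrow>
    square_integral F = square_integral G"
  unfolding square_integral_def by (intro integral_cong) auto

lemma square_integral_deriv_fst:
  assumes "continuous_on (cbox (0, 0) (1, 1)) (\<lambda>(u, t). K u t)"
    and "\<And>u t. u \<in> {0..1} \<Longrightarrow> t \<in> {0..1} \<Longrightarrow>
           ((\<lambda>u. P u t) has_vector_derivative K u t) (at u within {0..1})"
  shows "square_integral K = integral {0..1} (\<lambda>t. P 1 t - P 0 t)"
proof -
  have "square_integral K = integral {0..1} (\<lambda>t. integral {0..1} (\<lambda>u. K u t))"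
    unfolding square_integral_def using integral_swap_continuous[OF assms(1)]
    by (simp add: cbox_interval)
  also have "\<dots> = integral {0..1} (\<lambda>t. P 1 t - P 0 t)"
    using assms(2) by (intro integral_cong integral_unique fundamental_theorem_of_calculus) auto
  finally show ?thesis .
qed

lemma square_integral_deriv_snd:
  assumes "\<And>u t. u \<in> {0..1} \<Longrightarrow> t \<in> {0..1} \<Longrightarrow>
             ((\<lambda>t. P u t) has_vector_derivative K u t) (at t within {0..1})"
  shows "square_integral K = integral {0..1} (\<lambda>u. P u 1 - P u 0)"
  unfolding square_integral_def
  using assms by (intro integral_cong integral_unique fundamental_theorem_of_calculus) auto

lemma integral_unit_interval_rescale:
  fixes f :: "real \<Rightarrow> 'a::euclidean_space"
  assumes "0 \<le> a" "continuous_on {0..a} f"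
  shows "integral {0..a} f = integral {0..1} (\<lambda>t. a *\<^sub>R f (a * t))"
proof -
  have "((\<lambda>t. a *\<^sub>R f (a * t)) has_integral integral {a * 0..a * 1} f) {0..1}"
    by (rule has_integral_substitution[where c = 0 and d = a])
       (use assms in \<open>auto intro!: derivative_eq_intros simp: mult_left_le\<close>)
  then have "((\<lambda>t. a *\<^sub>R f (a * t)) has_integral integral {0..a} f) {0..1}"
    by simp
  then show ?thesis
    by (rule integral_unique[symmetric])
qed

lemma psi_eq_square_integral:
  "psi v1 ru rv n m b c = square_integral (\<lambda>u t. (1 - u) *\<^sub>R Q_fun v1 ru rv n m b c u ((1 - u) * t))"
  unfolding psi_def square_integral_def
proof (intro integral_cong integral_unit_interval_rescale)
  show "continuous_on {0..1 - u} (Q_fun v1 ru rv n m b c u)" for u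
    unfolding Q_fun_eq_scaleR r_q_def by (intro continuous_intros)
qed auto

lemma has_vector_derivative_Q_fun_square_fst:
  "((\<lambda>u. Q_fun v1 ru rv n m b c u ((1 - u) * t)) has_vector_derivative
      Q_fun_du v1 ru rv n m b c u ((1 - u) * t) - t *\<^sub>R Q_fun_dv v1 ru rv n m b c u ((1 - u) * t))
    (at u)"
  using Q_fun_line_deriv[where u = 0 and \<alpha> = 1 and v = t and \<beta> = "- t" and s = u]
  by (simp add: algebra_simps)

lemma has_vector_derivative_Q_fun_square_snd:
  "((\<lambda>t. Q_fun v1 ru rv n m b c u ((1 - u) * t)) has_vector_derivative
      (1 - u) *\<^sub>R Q_fun_dv v1 ru rv n m b c u ((1 - u) * t)) (at t)"
  using Q_fun_line_deriv[where u = u and \<alpha> = 0 and v = 0 and \<beta> = "1 - u" and s = t]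
  by (simp add: algebra_simps)

lemma Q_fun_euler_square:
  fixes u t :: real
  defines "v \<equiv> (1 - u) * t"
  shows "((1 - u) * u) *\<^sub>R (Q_fun_du v1 ru rv n m b c u v - t *\<^sub>R Q_fun_dv v1 ru rv n m b c u v)
      + (1 - 2 * u) *\<^sub>R Q_fun v1 ru rv n m b c u v
      + (t *\<^sub>R ((1 - u) *\<^sub>R Q_fun_dv v1 ru rv n m b c u v) + Q_fun v1 ru rv n m b c u v)
    = (1 - u) *\<^sub>R (of_int (n + int b + int c + 2) * Q_fun v1 ru rv n m b c u v
      - (u ^ b * v ^ c) *\<^sub>R solid_R_deriv n m (r_q v1 ru rv u v) v1)"
proof -
  have "((1 - u) * u) *\<^sub>R (Q_fun_du v1 ru rv n m b c u v - t *\<^sub>R Q_fun_dv v1 ru rv n m b c u v)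
      + (1 - 2 * u) *\<^sub>R Q_fun v1 ru rv n m b c u v
      + (t *\<^sub>R ((1 - u) *\<^sub>R Q_fun_dv v1 ru rv n m b c u v) + Q_fun v1 ru rv n m b c u v)
    = (1 - u) *\<^sub>R (u *\<^sub>R Q_fun_du v1 ru rv n m b c u v + v *\<^sub>R Q_fun_dv v1 ru rv n m b c u v
      + 2 * Q_fun v1 ru rv n m b c u v)"
    by (simp add: v_def scaleR_conv_of_real algebra_simps)
  then show ?thesis
    unfolding Q_fun_euler by (simp add: scaleR_conv_of_real algebra_simps)
qed

lemma j_fun_eq_square_integral:
  "j_fun v1 ru rv n m b c = square_integral (\<lambda>u t. (1 - u) *\<^sub>R
      (of_int (n + int b + int c + 2) * Q_fun v1 ru rv n m b c u ((1 - u) * t)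
       - (u ^ b * ((1 - u) * t) ^ c) *\<^sub>R solid_R_deriv n m (r_q v1 ru rv u ((1 - u) * t)) v1))"
proof -
  define H Hu Ht where "H u t = Q_fun v1 ru rv n m b c u ((1 - u) * t)"
    and "Hu u t = Q_fun_du v1 ru rv n m b c u ((1 - u) * t)
      - t *\<^sub>R Q_fun_dv v1 ru rv n m b c u ((1 - u) * t)"
    and "Ht u t = (1 - u) *\<^sub>R Q_fun_dv v1 ru rv n m b c u ((1 - u) * t)" for u t
  have cont: "continuous_on S (\<lambda>(u, t). H u t)" "continuous_on S (\<lambda>(u, t). Hu u t)"
    "continuous_on S (\<lambda>(u, t). Ht u t)" for S
    unfolding H_def Hu_def Ht_def Q_fun_du_def Q_fun_dv_def r_q_def case_prod_unfold
    by (intro continuous_intros)+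
  \<comment> \<open>\<open>(1 - u) * u\<close> vanishes at \<open>u = 0, 1\<close>; the edge \<open>t = 1\<close> of the square is mapped onto
    the hypotenuse \<open>v = 1 - u\<close>.\<close>
  have "((\<lambda>u. ((1 - u) * u) *\<^sub>R H u t) has_vector_derivative
      ((1 - u) * u) *\<^sub>R Hu u t + (1 - 2 * u) *\<^sub>R H u t) (at u within {0..1})" for u t
    unfolding H_def Hu_def
    by (rule has_vector_derivative_scaleR[OF _ has_vector_derivative_Q_fun_square_fst,
          THEN has_vector_derivative_at_within]) (auto intro!: derivative_eq_intros)
  then have "square_integral (\<lambda>u t. ((1 - u) * u) *\<^sub>R Hu u t + (1 - 2 * u) *\<^sub>R H u t)
      = integral {0..1} (\<lambda>t. ((1 - 1) * 1) *\<^sub>R H 1 t - ((1 - 0) * 0) *\<^sub>R H 0 t)"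
    using cont
    by (intro square_integral_deriv_fst) (auto simp: case_prod_unfold intro!: continuous_intros)
  then have "square_integral (\<lambda>u t. ((1 - u) * u) *\<^sub>R Hu u t + (1 - 2 * u) *\<^sub>R H u t) = 0"
    by simp
  moreover have "((\<lambda>t. t *\<^sub>R H u t) has_vector_derivative t *\<^sub>R Ht u t + H u t)
      (at t within {0..1})" for u t
    using has_vector_derivative_scaleR[OF DERIV_ident has_vector_derivative_Q_fun_square_snd]
    by (simp add: H_def Ht_def has_vector_derivative_at_within)
  then have "square_integral (\<lambda>u t. t *\<^sub>R Ht u t + H u t) = j_fun v1 ru rv n m b c"
    by (subst square_integral_deriv_snd) (auto simp: j_fun_def H_def)
  ultimately have "j_fun v1 ru rv n m b c = square_integral (\<lambda>u t. ((1 - u) * u) *\<^sub>R Hu u t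
      + (1 - 2 * u) *\<^sub>R H u t) + square_integral (\<lambda>u t. t *\<^sub>R Ht u t + H u t)"
    by simp
  also have "\<dots> = square_integral (\<lambda>u t. ((1 - u) * u) *\<^sub>R Hu u t + (1 - 2 * u) *\<^sub>R H u t
      + (t *\<^sub>R Ht u t + H u t))"
    using cont
    by (intro square_integral_add[symmetric]) (auto simp: case_prod_unfold intro!: continuous_intros)
  finally show ?thesis
    unfolding H_def Hu_def Ht_def Q_fun_euler_square .
qed

lemma has_integral_square_integral:
  assumes "continuous_on (cbox (0, 0) (1, 1)) (\<lambda>(u, t). F u t)"
  shows "((\<lambda>(u, t). F u t) has_integral square_integral F) (cbox (0, 0) (1, 1))"
  unfolding square_integral_eq_integral[OF assms]
  using assms by (intro integrable_integral integrable_continuous)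

lemma j_fun_eq_psi_combination:
  "j_fun v1 ru rv n m b c = of_int (n + int b + int c + 2) * psi v1 ru rv n m b c
     - (\<i> * xi v1 * psi v1 ru rv (n - 1) (m - 1) b c + \<i> * eta v1 * psi v1 ru rv (n - 1) (m + 1) b c
        - zeta v1 * psi v1 ru rv (n - 1) m b c)"
proof -
  define F where "F k l = (\<lambda>p. (1 - fst p) *\<^sub>R Q_fun v1 ru rv k l b c (fst p) ((1 - fst p) * snd p))"
    for k l
  define G where "G = (\<lambda>p. of_int (n + int b + int c + 2) * F n m p - (\<i> * xi v1 * F (n - 1) (m - 1) p
      + \<i> * eta v1 * F (n - 1) (m + 1) p - zeta v1 * F (n - 1) m p))"
  have psi: "(F k l has_integral psi v1 ru rv k l b c) (cbox (0, 0) (1, 1))" for k l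
    using has_integral_square_integral[of "\<lambda>u t. F k l (u, t)"]
    by (simp add: F_def psi_eq_square_integral case_prod_unfold continuous_intros)
  have "continuous_on (cbox (0, 0) (1, 1)) (\<lambda>(u, t). G (u, t))"
    unfolding G_def F_def case_prod_unfold by (intro continuous_intros)
  then have "((\<lambda>(u, t). G (u, t)) has_integral square_integral (\<lambda>u t. G (u, t))) (cbox (0, 0) (1, 1))"
    by (rule has_integral_square_integral)
  moreover have "square_integral (\<lambda>u t. G (u, t)) = j_fun v1 ru rv n m b c"
    unfolding j_fun_eq_square_integral
    by (intro square_integral_cong)
       (simp add: G_def F_def Q_fun_eq_scaleR solid_R_deriv_def scaleR_conv_of_real algebra_simps)
  ultimately have "(G has_integral j_fun v1 ru rv n m b c) (cbox (0, 0) (1, 1))"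
    by simp
  moreover have "(G has_integral of_int (n + int b + int c + 2) * psi v1 ru rv n m b c
        - (\<i> * xi v1 * psi v1 ru rv (n - 1) (m - 1) b c + \<i> * eta v1 * psi v1 ru rv (n - 1) (m + 1) b c
           - zeta v1 * psi v1 ru rv (n - 1) m b c)) (cbox (0, 0) (1, 1))"
    unfolding G_def by (intro has_integral_diff has_integral_add has_integral_mult_right psi)
  ultimately show ?thesis
    by (rule has_integral_unique)
qed

theorem lemma1:
  fixes v1 ru rv :: "real ^ 3" and n m :: int and b c :: nat
  assumes "independent {ru, rv}" and "ru \<noteq> rv"
    and "n \<ge> 0" and "\<bar>m\<bar> \<le> n"
  shows "psi v1 ru rv n m b c =
    (\<i> * ((complex_of_real (v1 $ 1) + \<i> * complex_of_real (v1 $ 2)) / 2) * psi v1 ru rv (n - 1) (m - 1) b c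
     + \<i> * ((complex_of_real (v1 $ 1) - \<i> * complex_of_real (v1 $ 2)) / 2) * psi v1 ru rv (n - 1) (m + 1) b c
     - complex_of_real (v1 $ 3) * psi v1 ru rv (n - 1) m b c
     + j_fun v1 ru rv n m b c) / of_int (n + int b + int c + 2)"
proof -
  define K where "K = (of_int (n + int b + int c + 2) :: complex)"
  have "K \<noteq> 0"
    unfolding K_def of_int_eq_0_iff using \<open>n \<ge> 0\<close> by linarith
  with j_fun_eq_psi_combination[of v1 ru rv n m b c, folded K_def]
  have "psi v1 ru rv n m b c = (\<i> * xi v1 * psi v1 ru rv (n - 1) (m - 1) b c
      + \<i> * eta v1 * psi v1 ru rv (n - 1) (m + 1) b c - zeta v1 * psi v1 ru rv (n - 1) m b c
      + j_fun v1 ru rv n m b c) / K"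
    by (simp add: field_simps)
  then show ?thesis
    by (simp only: K_def xi_def eta_def zeta_def)
qed

end
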